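(* For fixed $p\in(0,1)$ and every $j\ge0$, $$\lim_{K\to\infty}\frac{\mathbb E(W_j)}{K}=\mathbb Q_j\qquad\text{and}\qquad \lim_{K\to\infty}\frac{\mathbb E(W_j^+)}{K}=\sum_{\ell\ge j}\mathbb Q_\ell .$$
   Context: Uniform urn model. Let $v$ be a random variable with values in the positive integers, let $K\ge 1$, let $v_1,\dots,v_K$ be i.i.d. copies of $v$ and $V=v_1+\dots+v_K$. Fix $p\in(0,1)$, with $pV$ assumed to be an integer. Conditionally on $\{v_1,\dots,v_K\}$, $pV$ balls are drawn with replacement, independently, each drawn ball having color $i$ with probability $v_i/V$. Let $\tilde v_i$ be the number of drawn balls of color $i$; $W_j=\sum_{i=1}^K\mathbf 1\{\tilde v_i=j\}$ and $W_j^+=\sum_{i=1}^K\mathbf 1\{\tilde v_i\ge j\}$. Let $\mathbb Q_j=\mathbb E\big(\frac{(pv)^j}{j!}e^{-pv}\big)$. *)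

theory Defs
  imports "HOL-Probability.Probability"
begin

text \<open>The law of v is a pmf D on the naturals (supported on positive
integers). Colours are 0..K-1; vs i is the number of balls of colour i, V their sum.
We draw n = p V balls with replacement, each uniformly among the V balls
(so colour i has probability vs i / V). Under the standing assumption that p V is an integer, the floor is exact.\<close>

definition urn_counts :: "nat pmf \<Rightarrow> real \<Rightarrow> nat \<Rightarrow> (nat \<Rightarrow> nat) pmf" where
  "urn_counts D p K =
     Pi_pmf {..<K} 0 (\<lambda>_. D) \<bind> (\<lambda>vs.
       (let V = (\<Sum>i<K. vs i); n = nat \<lfloor>p * real V\<rfloor> in
        Pi_pmf {..<n} 0 (\<lambda>_. map_pmf fst (pmf_of_set {(i, b). i < K \<and> b < vs i})) \<bind>
          (\<lambda>draws. return_pmf (\<lambda>i. card {t. t < n \<and> draws t = i}))))"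

definition urnW :: "nat \<Rightarrow> nat \<Rightarrow> (nat \<Rightarrow> nat) \<Rightarrow> nat" where
  "urnW K j c = card {i. i < K \<and> c i = j}"

definition urnWplus :: "nat \<Rightarrow> nat \<Rightarrow> (nat \<Rightarrow> nat) \<Rightarrow> nat" where
  "urnWplus K j c = card {i. i < K \<and> c i \<ge> j}"

definition urnQ :: "nat pmf \<Rightarrow> real \<Rightarrow> nat \<Rightarrow> real" where
  "urnQ D p j = measure_pmf.expectation D (\<lambda>v. (p * real v) ^ j / fact j * exp (- (p * real v)))"

end

theory Submission
  imports Defs
begin

text \<open>
  Given the ball counts vs, colour i is hit by each of the n = \<lfloor>p V\<rfloor> draws
  independently with probability vs i / V, so its count is Binomial(n, vs i / V). Since
  V \<ge> K (all vs i \<ge> 1), V grows with K, and Binomial(\<lfloor>p V\<rfloor>, v / V) tends to Poisson(p v)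
  as V \<rightarrow> \<infinity> (law of rare events). Controlling the error uniformly over V \<ge> K by the tail
  supremum of the deviation and applying dominated convergence over v ~ D gives
  P(\<tilde>v_i = l) \<rightarrow> Q_l uniformly in i < K, hence E(W_l)/K \<rightarrow> Q_l by linearity.
  Finally W_j^+ = K - \<Sum>_{l<j} W_l, and the Q_l are the weights of a mixed Poisson law, so
  \<Sum>_{l\<ge>j} Q_l = 1 - \<Sum>_{l<j} Q_l.
\<close>

text \<open>The Poisson weight \<mu>^l/l! e^{-\<mu>}, defined for every real \<mu> (the library's
  poisson_pmf requires a positive rate).\<close>
definition poisson_weight :: "real \<Rightarrow> nat \<Rightarrow> real" where
  "poisson_weight \<mu> l = \<mu> ^ l / fact l * exp (- \<mu>)"

text \<open>If q \<rightarrow> 0 and n q \<rightarrow> \<mu>, then C(n,l) q^l \<rightarrow> \<mu>^l/l!: write C(n,l) q^l as the falling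
  product \<Prod>_{i<l} (n - i) q / l!, each factor tending to \<mu>.\<close>
lemma choose_times_power_tendsto:
  fixes n :: "'a \<Rightarrow> nat" and q :: "'a \<Rightarrow> real"
  assumes q0: "(q \<longlongrightarrow> 0) F" and nq: "((\<lambda>k. real (n k) * q k) \<longlongrightarrow> \<mu>) F"
  shows "((\<lambda>k. real (n k choose l) * q k ^ l) \<longlongrightarrow> \<mu> ^ l / fact l) F"
proof -
  have falling: "real (n k choose l) * q k ^ l = (\<Prod>i<l. (real (n k) - real i) * q k) / fact l" for k
    by (simp add: binomial_gbinomial gbinomial_prod_rev prod.distrib atLeast0LessThan)
  have factor: "((\<lambda>k. (real (n k) - real i) * q k) \<longlongrightarrow> \<mu>) F" for i
  proof -
    have "((\<lambda>k. real (n k) * q k - real i * q k) \<longlongrightarrow> \<mu> - real i * 0) F"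
      by (intro tendsto_diff nq tendsto_mult tendsto_const q0)
    thus ?thesis by (simp add: left_diff_distrib)
  qed
  have "((\<lambda>k. (\<Prod>i<l. (real (n k) - real i) * q k) / fact l) \<longlongrightarrow> (\<Prod>i<l. \<mu>) / fact l) F"
    by (intro tendsto_divide tendsto_prod factor tendsto_const) auto
  thus ?thesis by (simp add: falling)
qed

text \<open>Under the same hypotheses (1 - q)^n \<rightarrow> e^{-\<mu>}; eventually q \<le> 1/2, where
  -q - 2q^2 \<le> ln(1 - q) \<le> -q squeezes n ln(1 - q) towards -\<mu>.\<close>
lemma one_minus_power_tendsto_exp:
  fixes n :: "'a \<Rightarrow> nat" and q :: "'a \<Rightarrow> real"
  assumes q_nonneg: "\<forall>\<^sub>F k in F. 0 \<le> q k"
    and q0: "(q \<longlongrightarrow> 0) F" and nq: "((\<lambda>k. real (n k) * q k) \<longlongrightarrow> \<mu>) F"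
  shows "((\<lambda>k. (1 - q k) ^ n k) \<longlongrightarrow> exp (- \<mu>)) F"
proof -
  have "\<forall>\<^sub>F k in F. q k < 1/2"
    using order_tendstoD(2)[OF q0, of "1/2"] by simp
  with q_nonneg have small: "\<forall>\<^sub>F k in F. 0 \<le> q k \<and> q k \<le> 1/2"
    by eventually_elim auto
  have log_lim: "((\<lambda>k. real (n k) * ln (1 - q k)) \<longlongrightarrow> - \<mu>) F"
  proof (rule tendsto_sandwich[where f="\<lambda>k. - (real (n k) * q k) - 2 * (real (n k) * q k) * q k"
                                 and h="\<lambda>k. - (real (n k) * q k)"])
    show "\<forall>\<^sub>F k in F. - (real (n k) * q k) - 2 * (real (n k) * q k) * q k \<le> real (n k) * ln (1 - q k)"
      using small
    proof eventually_elim
      case (elim k)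
      have "- q k - 2 * (q k)\<^sup>2 \<le> ln (1 - q k)"
        using elim by (intro ln_one_minus_pos_lower_bound) auto
      hence "real (n k) * (- q k - 2 * (q k)\<^sup>2) \<le> real (n k) * ln (1 - q k)"
        by (intro mult_left_mono) auto
      thus ?case by (simp add: power2_eq_square algebra_simps)
    qed
    show "\<forall>\<^sub>F k in F. real (n k) * ln (1 - q k) \<le> - (real (n k) * q k)"
      using small
    proof eventually_elim
      case (elim k)
      have "ln (1 - q k) \<le> - q k"
        using elim ln_le_minus_one[of "1 - q k"] by auto
      hence "real (n k) * ln (1 - q k) \<le> real (n k) * (- q k)"
        by (rule mult_left_mono) simp
      thus ?case by simp
    qed
    show "((\<lambda>k. - (real (n k) * q k)) \<longlongrightarrow> - \<mu>) F"
      by (intro tendsto_intros nq)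
    show "((\<lambda>k. - (real (n k) * q k) - 2 * (real (n k) * q k) * q k) \<longlongrightarrow> - \<mu>) F"
      using tendsto_diff[OF tendsto_minus[OF nq] tendsto_mult[OF tendsto_mult[OF tendsto_const nq] q0]]
      by simp
  qed
  have "((\<lambda>k. exp (real (n k) * ln (1 - q k))) \<longlongrightarrow> exp (- \<mu>)) F"
    by (intro tendsto_intros log_lim)
  moreover have "\<forall>\<^sub>F k in F. exp (real (n k) * ln (1 - q k)) = (1 - q k) ^ n k"
    using small by eventually_elim (simp add: exp_of_nat_mult)
  ultimately show ?thesis by (rule Lim_transform_eventually)
qed

text \<open>The law of rare events: Binomial(n, q) tends pointwise to Poisson(\<mu>) when q \<rightarrow> 0
  and n q \<rightarrow> \<mu>. When l > n both sides of the factorisation below vanish.\<close>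
lemma binomial_pmf_tendsto_poisson_weight:
  fixes n :: "'a \<Rightarrow> nat" and q :: "'a \<Rightarrow> real"
  assumes q_nonneg: "\<forall>\<^sub>F k in F. 0 \<le> q k"
    and q0: "(q \<longlongrightarrow> 0) F" and nq: "((\<lambda>k. real (n k) * q k) \<longlongrightarrow> \<mu>) F"
  shows "((\<lambda>k. pmf (binomial_pmf (n k) (q k)) l) \<longlongrightarrow> poisson_weight \<mu> l) F"
proof -
  have "((\<lambda>k. real (n k choose l) * q k ^ l * ((1 - q k) ^ n k / (1 - q k) ^ l))
          \<longlongrightarrow> \<mu> ^ l / fact l * (exp (- \<mu>) / 1 ^ l)) F"
    by (intro tendsto_intros choose_times_power_tendsto one_minus_power_tendsto_exp
              assms tendsto_diff[OF tendsto_const q0, of 1, simplified]) simp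
  moreover have "\<forall>\<^sub>F k in F. real (n k choose l) * q k ^ l * ((1 - q k) ^ n k / (1 - q k) ^ l)
                              = pmf (binomial_pmf (n k) (q k)) l"
    using q_nonneg order_tendstoD(2)[OF q0, of 1, simplified]
  proof eventually_elim
    case (elim k)
    show ?case
    proof (cases "l \<le> n k")
      case True
      thus ?thesis using elim by (simp add: power_diff)
    qed (use elim in \<open>simp add: binomial_eq_0\<close>)
  qed
  ultimately show ?thesis by (simp add: poisson_weight_def Lim_transform_eventually)
qed

text \<open>The number of draws \<lfloor>p V\<rfloor> is p V up to an error below 1.\<close>
lemma floor_mult_over_tendsto:
  fixes p :: real
  assumes "0 \<le> p"
  shows "(\<lambda>V::nat. real (nat \<lfloor>p * real V\<rfloor>) / real V) \<longlonglongrightarrow> p"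
proof (rule tendsto_sandwich[where f="\<lambda>V. p - 1 / real V" and h="\<lambda>_. p"])
  show "\<forall>\<^sub>F V in sequentially. p - 1 / real V \<le> real (nat \<lfloor>p * real V\<rfloor>) / real V"
    using eventually_gt_at_top[of "0::nat"]
  proof eventually_elim
    case (elim V)
    have "p * real V - 1 \<le> real (nat \<lfloor>p * real V\<rfloor>)"
      using assms floor_correct[of "p * real V"] by (simp add: of_nat_nat)
    thus ?case using elim by (simp add: le_divide_eq algebra_simps)
  qed
  show "\<forall>\<^sub>F V in sequentially. real (nat \<lfloor>p * real V\<rfloor>) / real V \<le> p"
    using assms by (intro always_eventually allI) (simp add: divide_le_eq mult.commute)
  show "(\<lambda>V. p - 1 / real V) \<longlonglongrightarrow> p"
    using tendsto_diff[OF tendsto_const lim_inverse_n', of p] by (simp add: divide_inverse)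
qed simp

definition urn_binomial :: "real \<Rightarrow> nat \<Rightarrow> nat \<Rightarrow> nat \<Rightarrow> real" where
  "urn_binomial p l V v = pmf (binomial_pmf (nat \<lfloor>p * real V\<rfloor>) (real v / real V)) l"

lemma urn_binomial_tendsto_poisson:
  fixes p :: real and v l :: nat
  assumes "0 \<le> p"
  shows "(\<lambda>V. urn_binomial p l V v) \<longlonglongrightarrow> poisson_weight (p * real v) l"
  unfolding urn_binomial_def
proof (rule binomial_pmf_tendsto_poisson_weight)
  show "(\<lambda>V. real v / real V) \<longlonglongrightarrow> 0"
    by (rule tendsto_divide_0[OF tendsto_const filterlim_at_top_imp_at_infinity[OF filterlim_real_sequentially]])
  have "(\<lambda>V. real (nat \<lfloor>p * real V\<rfloor>) / real V * real v) \<longlonglongrightarrow> p * real v"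
    by (intro tendsto_mult floor_mult_over_tendsto assms tendsto_const)
  thus "(\<lambda>V. real (nat \<lfloor>p * real V\<rfloor>) * (real v / real V)) \<longlonglongrightarrow> p * real v"
    by (simp add: field_simps)
qed simp

lemma map_pmf_eq_bernoulli:
  "map_pmf (\<lambda>y. y = x) Q = bernoulli_pmf (pmf Q x)"
proof (rule pmf_eqI)
  fix b :: bool
  have "measure Q (UNIV - {x}) = 1 - pmf Q x"
    using measure_pmf.prob_compl[of "{x}" Q] by (simp add: measure_pmf_single)
  moreover have "{y. y \<noteq> x} = UNIV - {x}" by auto
  ultimately show "pmf (map_pmf (\<lambda>y. y = x) Q) b = pmf (bernoulli_pmf (pmf Q x)) b"
    by (cases b) (simp_all add: pmf_map vimage_def measure_pmf_single pmf_le_1)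
qed

lemma count_hits_binomial:
  "map_pmf (\<lambda>d. card {t. t < n \<and> d t = x}) (Pi_pmf {..<n} dflt (\<lambda>_. Q))
     = binomial_pmf n (pmf Q x)"
proof -
  have "binomial_pmf n (pmf Q x) =
     map_pmf (\<lambda>f. card {t\<in>{..<n}. f t}) (Pi_pmf {..<n} (dflt = x) (\<lambda>_. bernoulli_pmf (pmf Q x)))"
    by (rule binomial_pmf_altdef') (auto simp: pmf_le_1)
  also have "Pi_pmf {..<n} (dflt = x) (\<lambda>_. bernoulli_pmf (pmf Q x))
      = map_pmf (\<lambda>h. (\<lambda>y. y = x) \<circ> h) (Pi_pmf {..<n} dflt (\<lambda>_. Q))"
    using Pi_pmf_map[of "{..<n}" "\<lambda>y. y = x" dflt "dflt = x" "\<lambda>_. Q"]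
    by (simp add: map_pmf_eq_bernoulli)
  finally show ?thesis by (simp add: pmf.map_comp o_def)
qed

lemma colour_of_uniform_ball:
  fixes vs :: "nat \<Rightarrow> nat"
  assumes "i < K" and "0 < (\<Sum>i<K. vs i)"
  shows "pmf (map_pmf fst (pmf_of_set {(i, b). i < K \<and> b < vs i})) i
         = real (vs i) / real (\<Sum>i<K. vs i)"
proof -
  define S where "S = {(i, b). i < K \<and> b < vs i}"
  have S: "S = Sigma {..<K} (\<lambda>i. {..<vs i})" by (auto simp: S_def)
  have fin: "finite S" unfolding S by (intro finite_SigmaI) auto
  have card_S: "card S = (\<Sum>i<K. vs i)" by (simp add: S card_SigmaI)
  have "S \<inter> fst -` {i} = {i} \<times> {..<vs i}" using assms by (auto simp: S_def)
  hence "card (S \<inter> fst -` {i}) = vs i" by simp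
  moreover have "S \<noteq> {}" using card_S assms by auto
  ultimately show ?thesis
    using fin card_S unfolding S_def[symmetric]
    by (simp add: pmf_map measure_pmf_of_set)
qed

lemma urn_counts_marginal:
  fixes D :: "nat pmf" and K i :: nat
  assumes "i < K" and D: "set_pmf D \<subseteq> {1..}"
  shows "map_pmf (\<lambda>c. c i) (urn_counts D p K) =
    Pi_pmf {..<K} 0 (\<lambda>_. D) \<bind>
      (\<lambda>vs. binomial_pmf (nat \<lfloor>p * real (\<Sum>i<K. vs i)\<rfloor>) (real (vs i) / real (\<Sum>i<K. vs i)))"
  unfolding urn_counts_def map_bind_pmf Let_def
proof (intro bind_pmf_cong[OF refl])
  fix vs assume vs: "vs \<in> set_pmf (Pi_pmf {..<K} 0 (\<lambda>_. D))"
  define V where "V = (\<Sum>i<K. vs i)"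
  define n where "n = nat \<lfloor>p * real V\<rfloor>"
  define Q where "Q = map_pmf fst (pmf_of_set {(i, b). i < K \<and> b < vs i})"
  have "vs i \<in> set_pmf D"
    using vs assms(1) by (auto simp: set_Pi_pmf PiE_dflt_def)
  hence "0 < vs i" using D by auto
  moreover have "vs i \<le> V" unfolding V_def using assms(1) by (intro member_le_sum) auto
  ultimately have "pmf Q i = real (vs i) / real V"
    unfolding Q_def V_def by (intro colour_of_uniform_ball assms(1)) simp
  hence "map_pmf (\<lambda>d. card {t. t < n \<and> d t = i}) (Pi_pmf {..<n} 0 (\<lambda>_. Q))
           = binomial_pmf n (real (vs i) / real V)"
    by (simp add: count_hits_binomial)
  thus "Pi_pmf {..<nat \<lfloor>p * real (sum vs {..<K})\<rfloor>} 0
          (\<lambda>_. map_pmf fst (pmf_of_set {(i, b). i < K \<and> b < vs i})) \<bind>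
        (\<lambda>x. map_pmf (\<lambda>c. c i) (return_pmf (\<lambda>i. card {t. t < nat \<lfloor>p * real (sum vs {..<K})\<rfloor> \<and> x t = i})))
        = binomial_pmf (nat \<lfloor>p * real (\<Sum>i<K. vs i)\<rfloor>) (real (vs i) / real (\<Sum>i<K. vs i))"
    by (simp add: n_def V_def Q_def map_pmf_def[symmetric] pmf.map_comp o_def)
qed

definition tail_dev :: "(nat \<Rightarrow> real) \<Rightarrow> real \<Rightarrow> nat \<Rightarrow> real" where
  "tail_dev f L K = (SUP V\<in>{K..}. \<bar>f V - L\<bar>)"

lemma tail_dev_upper:
  assumes "\<forall>V. \<bar>f V - L\<bar> \<le> B" and "K \<le> V"
  shows "\<bar>f V - L\<bar> \<le> tail_dev f L K"
  unfolding tail_dev_def by (rule cSUP_upper) (use assms in \<open>auto intro: bdd_aboveI2\<close>)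

lemma tail_dev_le:
  assumes "\<forall>V. \<bar>f V - L\<bar> \<le> B"
  shows "tail_dev f L K \<le> B"
  unfolding tail_dev_def by (rule cSUP_least) (use assms in auto)

lemma tail_dev_nonneg:
  assumes "\<forall>V. \<bar>f V - L\<bar> \<le> B"
  shows "0 \<le> tail_dev f L K"
  using tail_dev_upper[OF assms order.refl, of K] by linarith

lemma tail_dev_tendsto_zero:
  assumes bound: "\<forall>V. \<bar>f V - L\<bar> \<le> B" and lim: "f \<longlonglongrightarrow> L"
  shows "tail_dev f L \<longlonglongrightarrow> 0"
proof (rule tendstoI)
  fix e :: real assume "0 < e"
  then obtain N where N: "\<And>V. N \<le> V \<Longrightarrow> \<bar>f V - L\<bar> < e / 2"
    using tendstoD[OF lim, of "e / 2"] by (auto simp: eventually_sequentially dist_real_def)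
  have "tail_dev f L K \<le> e / 2" if "N \<le> K" for K
    unfolding tail_dev_def by (rule cSUP_least) (use N that in \<open>auto intro: less_imp_le\<close>)
  hence "\<bar>tail_dev f L K\<bar> < e" if "N \<le> K" for K
    using that \<open>0 < e\<close> tail_dev_nonneg[OF bound, of K] by fastforce
  thus "\<forall>\<^sub>F K in sequentially. dist (tail_dev f L K) 0 < e"
    by (auto simp: eventually_sequentially dist_real_def)
qed

text \<open>The tail deviation of the one-colour law from its Poisson limit. Since V \<ge> K in the
  urn with K colours, urn_dev p l K v bounds the error for every admissible V.\<close>
definition urn_dev :: "real \<Rightarrow> nat \<Rightarrow> nat \<Rightarrow> nat \<Rightarrow> real" where
  "urn_dev p l K v = tail_dev (\<lambda>V. urn_binomial p l V v) (poisson_weight (p * real v) l) K"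

lemma poisson_weight_bounds:
  assumes "0 \<le> \<mu>"
  shows "0 \<le> poisson_weight \<mu> l" and "poisson_weight \<mu> l \<le> 1"
proof -
  show "0 \<le> poisson_weight \<mu> l" using assms by (simp add: poisson_weight_def)
  show "poisson_weight \<mu> l \<le> 1"
  proof (cases "\<mu> = 0")
    case False
    hence "poisson_weight \<mu> l = pmf (poisson_pmf \<mu>) l"
      using assms by (simp add: poisson_weight_def)
    thus ?thesis by (simp add: pmf_le_1)
  qed (simp add: poisson_weight_def power_0_left)
qed

text \<open>The uniform bound that makes tail deviations finite and dominated.\<close>
lemma urn_binomial_deviation_le_1:
  assumes "0 \<le> p"
  shows "\<forall>V. \<bar>urn_binomial p l V v - poisson_weight (p * real v) l\<bar> \<le> 1"
proof
  fix V
  have "0 \<le> urn_binomial p l V v" "urn_binomial p l V v \<le> 1"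
    unfolding urn_binomial_def by (simp_all add: pmf_le_1)
  moreover have "0 \<le> poisson_weight (p * real v) l" "poisson_weight (p * real v) l \<le> 1"
    using poisson_weight_bounds[of "p * real v" l] assms by simp_all
  ultimately show "\<bar>urn_binomial p l V v - poisson_weight (p * real v) l\<bar> \<le> 1" by linarith
qed

lemma expected_urn_dev_tendsto_zero:
  assumes "0 \<le> p"
  shows "(\<lambda>K. measure_pmf.expectation D (urn_dev p l K)) \<longlonglongrightarrow> 0"
proof -
  note bound = urn_binomial_deviation_le_1[OF assms]
  have "\<And>v. (\<lambda>K. urn_dev p l K v) \<longlonglongrightarrow> 0"
    unfolding urn_dev_def by (rule tail_dev_tendsto_zero[OF bound urn_binomial_tendsto_poisson[OF assms]])
  moreover have "\<And>K v. \<bar>urn_dev p l K v\<bar> \<le> 1"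
    unfolding urn_dev_def using tail_dev_le[OF bound] tail_dev_nonneg[OF bound] by (simp add: abs_le_iff)
  ultimately have "(\<lambda>K. measure_pmf.expectation D (urn_dev p l K))
                     \<longlonglongrightarrow> measure_pmf.expectation D (\<lambda>_. 0::real)"
    by (intro integral_dominated_convergence[where w="\<lambda>_. 1"]) auto
  thus ?thesis by simp
qed

lemma urn_total_ge:
  fixes D :: "nat pmf" and vs :: "nat \<Rightarrow> nat"
  assumes "vs \<in> set_pmf (Pi_pmf {..<K} 0 (\<lambda>_. D))" and "set_pmf D \<subseteq> {1..}"
  shows "K \<le> (\<Sum>i<K. vs i)"
proof -
  have "\<forall>i<K. 1 \<le> vs i" using assms by (force simp: set_Pi_pmf PiE_dflt_def)
  thus ?thesis using sum_mono[of "{..<K}" "\<lambda>_. 1::nat" vs] by simp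
qed

text \<open>Uniformly in i < K, P(\<tilde>v_i = l) differs from Q_l by at most the averaged tail
  deviation: average the one-colour law over the ball vector, where V \<ge> K.\<close>
lemma urn_marginal_deviation:
  fixes D :: "nat pmf" and K i l :: nat
  assumes "i < K" and D: "set_pmf D \<subseteq> {1..}" and p: "0 \<le> p"
  shows "\<bar>pmf (map_pmf (\<lambda>c. c i) (urn_counts D p K)) l - urnQ D p l\<bar>
           \<le> measure_pmf.expectation D (urn_dev p l K)"
proof -
  define P where "P = Pi_pmf {..<K} 0 (\<lambda>_. D)"
  define V where "V = (\<lambda>vs::nat \<Rightarrow> nat. \<Sum>i<K. vs i)"
  define g where "g = (\<lambda>vs. urn_binomial p l (V vs) (vs i) - poisson_weight (p * real (vs i)) l)"
  note bound = urn_binomial_deviation_le_1[OF p]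
  have marginal_D: "map_pmf (\<lambda>vs. vs i) P = D"
    using Pi_pmf_component[of "{..<K}" i 0 "\<lambda>_. D"] assms(1) by (simp add: P_def)
  have lift: "measure_pmf.expectation D f = measure_pmf.expectation P (\<lambda>vs. f (vs i))"
    for f :: "nat \<Rightarrow> real"
    by (simp flip: marginal_D)
  have int_binomial: "integrable P (\<lambda>vs. urn_binomial p l (V vs) (vs i))"
    by (rule measure_pmf.integrable_const_bound[where B=1]) (simp_all add: urn_binomial_def pmf_le_1)
  have int_poisson: "integrable P (\<lambda>vs. poisson_weight (p * real (vs i)) l)"
    by (rule measure_pmf.integrable_const_bound[where B=1]) (use poisson_weight_bounds p in auto)
  have binomial: "pmf (map_pmf (\<lambda>c. c i) (urn_counts D p K)) l
                    = measure_pmf.expectation P (\<lambda>vs. urn_binomial p l (V vs) (vs i))"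
    unfolding urn_counts_marginal[OF assms(1,2)] pmf_bind urn_binomial_def V_def P_def ..
  have poisson: "urnQ D p l = measure_pmf.expectation P (\<lambda>vs. poisson_weight (p * real (vs i)) l)"
    unfolding urnQ_def poisson_weight_def[symmetric] by (rule lift)
  have "pmf (map_pmf (\<lambda>c. c i) (urn_counts D p K)) l - urnQ D p l
          = measure_pmf.expectation P (\<lambda>vs. urn_binomial p l (V vs) (vs i))
            - measure_pmf.expectation P (\<lambda>vs. poisson_weight (p * real (vs i)) l)"
    unfolding binomial poisson ..
  also have "\<dots> = measure_pmf.expectation P g"
    unfolding g_def by (rule Bochner_Integration.integral_diff[symmetric, OF int_binomial int_poisson])
  finally have "\<bar>pmf (map_pmf (\<lambda>c. c i) (urn_counts D p K)) l - urnQ D p l\<bar>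
                  = norm (measure_pmf.expectation P g)" by simp
  also have "\<dots> \<le> measure_pmf.expectation P (\<lambda>vs. norm (g vs))"
    by (rule integral_norm_bound)
  also have "\<dots> \<le> measure_pmf.expectation P (\<lambda>vs. urn_dev p l K (vs i))"
  proof (rule integral_mono_AE)
    show "AE vs in P. norm (g vs) \<le> urn_dev p l K (vs i)"
      unfolding AE_measure_pmf_iff
    proof
      fix vs assume "vs \<in> set_pmf P"
      hence "K \<le> V vs" unfolding V_def P_def by (rule urn_total_ge[OF _ D])
      thus "norm (g vs) \<le> urn_dev p l K (vs i)"
        unfolding g_def urn_dev_def using tail_dev_upper[OF bound] by simp
    qed
    show "integrable P (\<lambda>vs. norm (g vs))" "integrable P (\<lambda>vs. urn_dev p l K (vs i))"
      unfolding g_def urn_dev_def using bound tail_dev_le[OF bound] tail_dev_nonneg[OF bound]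
      by (auto intro!: measure_pmf.integrable_const_bound[where B=1])
  qed
  also have "\<dots> = measure_pmf.expectation D (urn_dev p l K)"
    by (rule lift[symmetric])
  finally show ?thesis .
qed

lemma average_marginal_tendsto:
  fixes D :: "nat pmf" and l :: nat
  assumes D: "set_pmf D \<subseteq> {1..}" and p: "0 \<le> p"
  shows "(\<lambda>K. (\<Sum>i<K. pmf (map_pmf (\<lambda>c. c i) (urn_counts D p K)) l) / real K) \<longlonglongrightarrow> urnQ D p l"
proof -
  define a where "a = (\<lambda>K i. pmf (map_pmf (\<lambda>c. c i) (urn_counts D p K)) l)"
  have "(\<lambda>K. (\<Sum>i<K. a K i) / real K - urnQ D p l) \<longlonglongrightarrow> 0"
  proof (rule Lim_null_comparison[OF _ expected_urn_dev_tendsto_zero[OF p, of D l]])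
    show "\<forall>\<^sub>F K in sequentially.
            norm ((\<Sum>i<K. a K i) / real K - urnQ D p l) \<le> measure_pmf.expectation D (urn_dev p l K)"
      using eventually_gt_at_top[of "0::nat"]
    proof eventually_elim
      case (elim K)
      have "(\<Sum>i<K. a K i) / real K - urnQ D p l = (\<Sum>i<K. a K i - urnQ D p l) / real K"
        using elim by (simp add: sum_subtractf field_simps)
      hence "norm ((\<Sum>i<K. a K i) / real K - urnQ D p l) = \<bar>\<Sum>i<K. a K i - urnQ D p l\<bar> / real K"
        by simp
      also have "\<dots> \<le> (\<Sum>i<K. \<bar>a K i - urnQ D p l\<bar>) / real K"
        by (intro divide_right_mono sum_abs) auto
      also have "\<dots> \<le> (\<Sum>i<K. measure_pmf.expectation D (urn_dev p l K)) / real K"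
        unfolding a_def by (intro divide_right_mono sum_mono urn_marginal_deviation D p) auto
      finally show ?case using elim by simp
    qed
  qed
  from tendsto_add[OF this tendsto_const[of "urnQ D p l"]] show ?thesis
    by (simp add: a_def)
qed

lemma urnW_le: "urnW K j c \<le> K"
  unfolding urnW_def using card_mono[of "{..<K}" "{i. i < K \<and> c i = j}"] by auto

lemma expectation_urnW:
  fixes M :: "(nat \<Rightarrow> nat) pmf"
  shows "measure_pmf.expectation M (\<lambda>c. real (urnW K j c)) = (\<Sum>i<K. pmf (map_pmf (\<lambda>c. c i) M) j)"
proof -
  have "real (urnW K j c) = (\<Sum>i<K. indicator {c. c i = j} c)" for c :: "nat \<Rightarrow> nat"
  proof -
    have "{i. i < K \<and> c i = j} = {..<K} \<inter> {i. c i = j}" by auto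
    thus ?thesis by (simp add: urnW_def indicator_def sum_of_bool_eq)
  qed
  hence "measure_pmf.expectation M (\<lambda>c. real (urnW K j c))
           = (\<Sum>i<K. measure_pmf.expectation M (indicator {c. c i = j}))"
    by (simp add: Bochner_Integration.integral_sum measure_pmf.integrable_const_bound[where B=1])
  thus ?thesis by (simp add: pmf_map vimage_def)
qed

lemma urnWplus_eq_complement:
  "real (urnWplus K j c) = real K - (\<Sum>l<j. real (urnW K l c))"
proof -
  have below: "(\<Sum>l<j. of_bool (c i = l) :: real) = of_bool (c i < j)" for i
    by (simp add: sum.delta')
  have count: "(\<Sum>i<K. of_bool (c i = l) :: real) = real (urnW K l c)" for l
  proof -
    have "{i. i < K \<and> c i = l} = {..<K} \<inter> {i. c i = l}" by auto
    thus ?thesis by (simp add: urnW_def sum_of_bool_eq)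
  qed
  have "{i. i < K \<and> j \<le> c i} = {..<K} \<inter> {i. \<not> c i < j}" by auto
  hence "real (urnWplus K j c) = (\<Sum>i<K. 1 - (\<Sum>l<j. of_bool (c i = l)))"
    by (simp add: urnWplus_def below sum_of_bool_eq[symmetric] of_bool_not_iff)
  also have "\<dots> = real K - (\<Sum>i<K. \<Sum>l<j. of_bool (c i = l))"
    by (simp only: sum_subtractf) simp
  also have "\<dots> = real K - (\<Sum>l<j. \<Sum>i<K. of_bool (c i = l))"
    by (simp only: sum.swap[of _ "{..<K}"])
  also have "\<dots> = real K - (\<Sum>l<j. real (urnW K l c))"
    by (simp add: count)
  finally show ?thesis .
qed

lemma expectation_urnWplus:
  fixes M :: "(nat \<Rightarrow> nat) pmf"
  shows "measure_pmf.expectation M (\<lambda>c. real (urnWplus K j c))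
           = real K - (\<Sum>l<j. measure_pmf.expectation M (\<lambda>c. real (urnW K l c)))"
proof -
  have integrable: "integrable M (\<lambda>c. real (urnW K l c))" for l
    by (rule measure_pmf.integrable_const_bound[where B="real K"]) (simp_all add: urnW_le)
  show ?thesis
    unfolding urnWplus_eq_complement
    by (simp add: Bochner_Integration.integral_diff Bochner_Integration.integral_sum integrable)
qed

text \<open>Q_l is the probability of l under the mixed Poisson law D \<bind> Poisson(p v), so its
  tail from j equals 1 - \<Sum>_{l<j} Q_l. (The rate is clamped by max 1 v only to keep it
  positive off the support of D.)\<close>
lemma urnQ_tail_sum:
  fixes D :: "nat pmf"
  assumes D: "set_pmf D \<subseteq> {1..}" and p: "0 < p"
  shows "(\<Sum>l. urnQ D p (l + j)) = 1 - (\<Sum>l<j. urnQ D p l)"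
proof -
  define M where "M = D \<bind> (\<lambda>v. poisson_pmf (p * real (max 1 v)))"
  have pmf_M: "pmf M l = urnQ D p l" for l
    unfolding M_def pmf_bind urnQ_def
  proof (rule integral_cong_AE)
    show "AE v in measure_pmf D. pmf (poisson_pmf (p * real (max 1 v))) l =
             (p * real v) ^ l / fact l * exp (- (p * real v))"
      unfolding AE_measure_pmf_iff
    proof
      fix v assume "v \<in> set_pmf D"
      hence "1 \<le> v" using D by auto
      thus "pmf (poisson_pmf (p * real (max 1 v))) l = (p * real v) ^ l / fact l * exp (- (p * real v))"
        using p by (simp add: max_absorb2)
    qed
  qed auto
  have abs: "Infinite_Set_Sum.abs_summable_on (pmf M) UNIV" by (rule pmf_abs_summable)
  hence "summable (pmf M)"
    unfolding abs_summable_on_nat_iff' using summable_norm_cancel by blast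
  moreover have "suminf (pmf M) = 1"
    using infsetsum_nat'[OF abs] infsetsum_pmf_eq_1[of M UNIV] by simp
  ultimately have "(\<Sum>l. pmf M (l + j)) = 1 - (\<Sum>l<j. pmf M l)"
    using suminf_minus_initial_segment[of "pmf M" j] by simp
  thus ?thesis by (simp add: pmf_M)
qed

theorem mainTheorem4:
  fixes D :: "nat pmf" and p :: real and j :: nat
  assumes "set_pmf D \<subseteq> {1..}"
    and "0 < p" and "p < 1"
    and "\<forall>n\<in>set_pmf D. p * real n \<in> \<int>"
  shows "((\<lambda>K. measure_pmf.expectation (urn_counts D p K) (\<lambda>c. real (urnW K j c)) / real K)
           \<longlonglongrightarrow> urnQ D p j) \<and>
         ((\<lambda>K. measure_pmf.expectation (urn_counts D p K) (\<lambda>c. real (urnWplus K j c)) / real K)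
           \<longlonglongrightarrow> (\<Sum>l. urnQ D p (l + j)))"
proof
  have W_lim: "(\<lambda>K. measure_pmf.expectation (urn_counts D p K) (\<lambda>c. real (urnW K l c)) / real K)
                 \<longlonglongrightarrow> urnQ D p l" for l
    unfolding expectation_urnW using assms(1,2) by (intro average_marginal_tendsto) auto
  thus "(\<lambda>K. measure_pmf.expectation (urn_counts D p K) (\<lambda>c. real (urnW K j c)) / real K)
           \<longlonglongrightarrow> urnQ D p j" .
  have "(\<lambda>K. 1 - (\<Sum>l<j. measure_pmf.expectation (urn_counts D p K) (\<lambda>c. real (urnW K l c)) / real K))
          \<longlonglongrightarrow> 1 - (\<Sum>l<j. urnQ D p l)"
    by (intro tendsto_intros W_lim)
  moreover have "\<forall>\<^sub>F K in sequentially.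
     1 - (\<Sum>l<j. measure_pmf.expectation (urn_counts D p K) (\<lambda>c. real (urnW K l c)) / real K)
       = measure_pmf.expectation (urn_counts D p K) (\<lambda>c. real (urnWplus K j c)) / real K"
    using eventually_gt_at_top[of "0::nat"]
    by eventually_elim (simp add: expectation_urnWplus diff_divide_distrib sum_divide_distrib)
  ultimately show "(\<lambda>K. measure_pmf.expectation (urn_counts D p K) (\<lambda>c. real (urnWplus K j c)) / real K)
           \<longlonglongrightarrow> (\<Sum>l. urnQ D p (l + j))"
    unfolding urnQ_tail_sum[OF assms(1,2)] by (rule Lim_transform_eventually)
qed

end
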